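(* Let $Y\in\{0,1\}$ be a binary random label with $0<P(Y=1)<1$, and let $X=(\mathbf{x}_1,\dots,\mathbf{x}_M)$ be a bag of $M$ random instances which are conditionally independent given $Y$, each having a conditional density $p(\mathbf{x}_m\mid Y)$. Let $I\subseteq\{1,\dots,M\}$ be the set of informative instances, with $|I|=\tilde M\ge 1$, where every uninformative instance $m\notin I$ satisfies $p(\mathbf{x}_m\mid Y=1)=p(\mathbf{x}_m\mid Y=0)$. Set $u_m=1$ if $m\in I$ and $u_m=0$ otherwise. Let $g$ be a real-valued function with $\sigma(g(\mathbf{x}_m))=P(Y=1\mid \mathbf{x}_m)$ for every $m\in I$, where $\sigma(t)=1/(1+e^{-t})$, and define $$f(X)=\frac{1}{\tilde M}\sum_{m=1}^{M} g(\mathbf{x}_m)\,u_m .$$ Then $$\operatorname{logit}(Y=1\mid X)=\tilde M\, f(X)+C,$$ where $\operatorname{logit}(Y=1\mid X)=\log\frac{P(Y=1\mid X)}{P(Y=0\mid X)}$ and $C$ is a constant that does not depend on $X$ (it depends only on $\tilde M$ and the prior $P(Y=1)$).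
   Context: In the paper, $g=g_{\boldsymbol\theta}$ is a neural network whose sigmoid output $\sigma(g(\mathbf{x}))$ is interpreted as the probability that a bag (whole-slide image) is malignant given a single instance (image patch) $\mathbf{x}$, and $f(X)$ is the slide-level prediction obtained by averaging $g$ over the $\tilde M$ instances identified as informative. For a probability $P(\cdot)$, $\operatorname{logit}(\cdot)=\log\big(P(\cdot)/(1-P(\cdot))\big)$. *)

theory Defs
  imports "HOL-Analysis.Analysis"
begin

text \<open>Class-conditional instance densities: p y m x is the density of instance m at x
  given Y = y (True means Y = 1), with respect to a reference measure.
  A bag X is a function xs :: nat => 'a, instances indexed by {1..M}.\<close>

definition sigmoid :: "real \<Rightarrow> real" where
  "sigmoid t = 1 / (1 + exp (- t))"

text \<open>Posterior P(Y=1 | X) by Bayes' rule, where conditional independence of the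
  instances given Y means that the joint conditional density is the product.\<close>
definition bag_posterior ::
  "real \<Rightarrow> (bool \<Rightarrow> nat \<Rightarrow> 'a \<Rightarrow> real) \<Rightarrow> nat \<Rightarrow> (nat \<Rightarrow> 'a) \<Rightarrow> real" where
  "bag_posterior prior p M xs =
     prior * (\<Prod>m\<in>{1..M}. p True m (xs m)) /
     (prior * (\<Prod>m\<in>{1..M}. p True m (xs m)) + (1 - prior) * (\<Prod>m\<in>{1..M}. p False m (xs m)))"

definition inst_posterior ::
  "real \<Rightarrow> (bool \<Rightarrow> nat \<Rightarrow> 'a \<Rightarrow> real) \<Rightarrow> nat \<Rightarrow> 'a \<Rightarrow> real" where
  "inst_posterior prior p m x = prior * p True m x / (prior * p True m x + (1 - prior) * p False m x)"

definition bag_logit ::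
  "real \<Rightarrow> (bool \<Rightarrow> nat \<Rightarrow> 'a \<Rightarrow> real) \<Rightarrow> nat \<Rightarrow> (nat \<Rightarrow> 'a) \<Rightarrow> real" where
  "bag_logit prior p M xs = ln (bag_posterior prior p M xs / (1 - bag_posterior prior p M xs))"

definition ind_u :: "nat set \<Rightarrow> nat \<Rightarrow> real" where
  "ind_u I m = (if m \<in> I then 1 else 0)"

definition f_pool :: "('a \<Rightarrow> real) \<Rightarrow> nat set \<Rightarrow> nat \<Rightarrow> (nat \<Rightarrow> 'a) \<Rightarrow> real" where
  "f_pool g I M xs = (1 / real (card I)) * (\<Sum>m\<in>{1..M}. g (xs m) * ind_u I m)"

end

theory Submission
  imports Defs
begin

text \<open>By Bayes' rule and conditional independence, the bag log-odds is the prior log-odds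
  plus the sum of the instance log-likelihood ratios. Uninformative instances contribute
  ratio 1, and for an informative instance the calibration of g says that g equals the
  prior log-odds plus its log-likelihood ratio. Summing over the informative instances
  gives the claim with C = (1 - card I) times the prior log-odds.\<close>

definition log_odds :: "real \<Rightarrow> real" where
  "log_odds q = ln (q / (1 - q))"

definition log_lik_ratio :: "(bool \<Rightarrow> nat \<Rightarrow> 'a \<Rightarrow> real) \<Rightarrow> nat \<Rightarrow> 'a \<Rightarrow> real" where
  "log_lik_ratio p m x = ln (p True m x / p False m x)"

lemma log_odds_normalize:
  fixes u v :: real
  assumes "0 < u" "0 < v"
  shows "log_odds (u / (u + v)) = ln (u / v)"
proof -
  have "1 - u / (u + v) = v / (u + v)"
    using assms by (simp add: field_simps)
  then show ?thesis
    unfolding log_odds_def using assms by simp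
qed

lemma log_odds_bayes:
  fixes \<pi> a b :: real
  assumes "0 < \<pi>" "\<pi> < 1" "0 < a" "0 < b"
  shows "log_odds (\<pi> * a / (\<pi> * a + (1 - \<pi>) * b)) = log_odds \<pi> + ln (a / b)"
proof -
  have "log_odds (\<pi> * a / (\<pi> * a + (1 - \<pi>) * b)) = ln (\<pi> * a / ((1 - \<pi>) * b))"
    using assms by (intro log_odds_normalize) simp_all
  also have "\<dots> = log_odds \<pi> + ln (a / b)"
    unfolding log_odds_def using assms by (subst ln_mult_pos[symmetric]) auto
  finally show ?thesis .
qed

lemma sigmoid_eq_imp_eq_log_odds:
  assumes "sigmoid t = q" "0 < q" "q < 1"
  shows "t = log_odds q"
proof -
  have "1 + exp (- t) = 1 / q"
    using assms(1) unfolding sigmoid_def by (metis inverse_eq_divide inverse_inverse_eq)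
  then have "exp (- t) = (1 - q) / q"
    using assms by (simp add: field_simps)
  then have "exp t = q / (1 - q)"
    using assms by (simp add: exp_minus field_simps)
  then show ?thesis
    unfolding log_odds_def by (metis ln_exp)
qed

lemma bag_logit_eq_sum_log_lik_ratio:
  assumes "0 < prior" "prior < 1"
    and pos: "\<forall>m\<in>{1..M}. 0 < p True m (xs m) \<and> 0 < p False m (xs m)"
  shows "bag_logit prior p M xs = log_odds prior + (\<Sum>m\<in>{1..M}. log_lik_ratio p m (xs m))"
proof -
  let ?P = "\<lambda>y. \<Prod>m\<in>{1..M}. p y m (xs m)"
  have "0 < ?P True" "0 < ?P False"
    using pos by (auto intro: prod_pos)
  have "bag_logit prior p M xs = log_odds (prior * ?P True / (prior * ?P True + (1 - prior) * ?P False))"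
    unfolding bag_logit_def bag_posterior_def log_odds_def ..
  also have "\<dots> = log_odds prior + ln (?P True / ?P False)"
    using assms(1,2) \<open>0 < ?P True\<close> \<open>0 < ?P False\<close> by (rule log_odds_bayes)
  also have "?P True / ?P False = (\<Prod>m\<in>{1..M}. p True m (xs m) / p False m (xs m))"
    by (simp add: prod_dividef)
  also have "ln \<dots> = (\<Sum>m\<in>{1..M}. log_lik_ratio p m (xs m))"
    unfolding log_lik_ratio_def using pos by (intro ln_prod) (auto dest!: bspec)
  finally show ?thesis .
qed

lemma calibrated_score_eq:
  assumes "0 < prior" "prior < 1" "0 < p True m x" "0 < p False m x"
    and "sigmoid (g x) = inst_posterior prior p m x"
  shows "g x = log_odds prior + log_lik_ratio p m x"
proof -
  have "0 < prior * p True m x" "0 < (1 - prior) * p False m x"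
    using assms(1-4) by simp_all
  then have "0 < inst_posterior prior p m x" "inst_posterior prior p m x < 1"
    unfolding inst_posterior_def by (simp_all add: divide_less_eq)
  then have "g x = log_odds (inst_posterior prior p m x)"
    by (rule sigmoid_eq_imp_eq_log_odds[OF assms(5)])
  then show ?thesis
    unfolding inst_posterior_def log_lik_ratio_def using assms(1-4) log_odds_bayes by simp
qed

lemma card_mult_f_pool:
  assumes "I \<subseteq> {1..M}"
  shows "real (card I) * f_pool g I M xs = (\<Sum>m\<in>I. g (xs m))"
proof -
  have "(\<Sum>m\<in>{1..M}. g (xs m) * ind_u I m) = (\<Sum>m\<in>I. g (xs m) * ind_u I m)"
    using assms by (intro sum.mono_neutral_right) (auto simp: ind_u_def)
  also have "\<dots> = (\<Sum>m\<in>I. g (xs m))"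
    by (simp add: ind_u_def)
  finally show ?thesis
    unfolding f_pool_def by (cases "card I = 0") (auto simp: card_eq_0_iff)
qed

theorem proposition1:
  "\<exists>C :: nat \<Rightarrow> real \<Rightarrow> real.
     \<forall>(\<mu> :: 'a measure) (p :: bool \<Rightarrow> nat \<Rightarrow> 'a \<Rightarrow> real) (prior :: real) (M :: nat)
       (I :: nat set) (g :: 'a \<Rightarrow> real).
       0 < prior \<and> prior < 1
       \<and> (\<forall>y. \<forall>m\<in>{1..M}. p y m \<in> borel_measurable \<mu> \<and> (\<forall>x. 0 \<le> p y m x)
                         \<and> (\<integral>\<^sup>+ x. ennreal (p y m x) \<partial>\<mu>) = 1)
       \<and> I \<subseteq> {1..M} \<and> card I \<ge> 1
       \<and> (\<forall>m\<in>{1..M} - I. \<forall>x. p True m x = p False m x)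
       \<and> (\<forall>m\<in>I. \<forall>x. 0 < p True m x \<and> 0 < p False m x \<longrightarrow>
              sigmoid (g x) = inst_posterior prior p m x)
     \<longrightarrow> (\<forall>xs :: nat \<Rightarrow> 'a.
            (\<forall>m\<in>{1..M}. 0 < p True m (xs m) \<and> 0 < p False m (xs m)) \<longrightarrow>
            bag_logit prior p M xs = real (card I) * f_pool g I M xs + C (card I) prior)"
proof (intro exI[of _ "\<lambda>k \<pi>. (1 - real k) * log_odds \<pi>"] allI impI, elim conjE)
  fix p :: "bool \<Rightarrow> nat \<Rightarrow> 'a \<Rightarrow> real" and prior M I and g :: "'a \<Rightarrow> real" and xs
  assume prior: "0 < prior" "prior < 1" and I: "I \<subseteq> {1..M}"
    and uninformative: "\<forall>m\<in>{1..M} - I. \<forall>x. p True m x = p False m x"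
    and calibrated: "\<forall>m\<in>I. \<forall>x. 0 < p True m x \<and> 0 < p False m x \<longrightarrow>
              sigmoid (g x) = inst_posterior prior p m x"
    and pos: "\<forall>m\<in>{1..M}. 0 < p True m (xs m) \<and> 0 < p False m (xs m)"
  have "(\<Sum>m\<in>{1..M}. log_lik_ratio p m (xs m)) = (\<Sum>m\<in>I. log_lik_ratio p m (xs m))"
    using I uninformative pos by (intro sum.mono_neutral_right) (auto simp: log_lik_ratio_def)
  moreover have "(\<Sum>m\<in>I. g (xs m)) = (\<Sum>m\<in>I. log_odds prior + log_lik_ratio p m (xs m))"
    using I calibrated pos prior by (intro sum.cong refl calibrated_score_eq) auto
  ultimately show "bag_logit prior p M xs
      = real (card I) * f_pool g I M xs + (1 - real (card I)) * log_odds prior"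
    using bag_logit_eq_sum_log_lik_ratio[of prior M p xs] prior pos card_mult_f_pool[OF I, of g xs]
    by (simp add: sum.distrib algebra_simps)
qed

end
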